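(* Let $n,d\in\mathbb{N}$. For every entry-wise matrix norm $\|\cdot\|$ on $\mathbb{R}^{n\times n}$, and also for the cut norm $\|\cdot\|_\square$, the function $\widetilde{\delta}^{\mathcal{T}}_{\|\cdot\|}$ is a pseudo-metric on $\mathcal{G}^{\mathbb{B}}_{n,d}$. Additionally, for two vertex-labeled graphs $G,H \in \mathcal{G}^{\mathbb{B}}_{n,d}$, $\widetilde{\delta}^{\mathcal{T}}_{\|\cdot\|}(G,H) = 0$ if and only if $G$ and $H$ are $1$-WL indistinguishable.
   Context: $\mathcal{G}^{\mathbb{B}}_{n,d}$ is the set of labeled graphs $(G,\ell_G)$ with vertex set $V(G)=[n]$ (undirected, no loops) and label function $\ell_G\colon [n]\to\{0,1\}^d$. $\vec{A}(G)\in\{0,1\}^{n\times n}$ is the adjacency matrix. $D_n$ is the set of $n\times n$ doubly-stochastic matrices (nonnegative entries, all row and column sums $1$). Let $\mathrm{dist}$ be a metric on $\{0,1\}^d$ and $\vec{L}(G,H)\in\mathbb{R}^{n\times n}$ the matrix with entries $\vec{L}(G,H)_{ij} = \mathrm{dist}(\ell_G(i),\ell_H(j))$. Define $\widetilde{\delta}^{\mathcal{T}}_{\|\cdot\|}(G,H) = \min_{\vec{S}\in D_n} \|\vec{A}(G)\vec{S} - \vec{S}\vec{A}(H)\| + \mathrm{tr}(\vec{S}^\top \vec{L}(G,H))$. An entry-wise matrix norm is a matrix norm (a norm on $\mathbb{R}^{n\times n}$ with $\|\vec{M}\vec{N}\|\le\|\vec{M}\|\|\vec{N}\|$) defined by applying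 a vector norm on $\mathbb{R}^{n^2}$ to the matrix viewed as a vector. The cut norm is $\|\vec{M}\|_\square = \max_{S,T\subseteq[n]} |\sum_{i\in S,j\in T} m_{ij}|$. A pseudo-metric $\delta$ satisfies $\delta(x,x)=0$, symmetry, and the triangle inequality (nonnegative values). $1$-WL: on a labeled graph, $C_0 = $ labels (injectively encoded as naturals), $C_t(v) = \mathsf{RELABEL}(C_{t-1}(v), \{\!\!\{C_{t-1}(u): u\in N(v)\}\!\!\})$ with $\mathsf{RELABEL}$ injective into fresh naturals; run on $G$ and $H$ in parallel (on the disjoint union). $G$ and $H$ are $1$-WL indistinguishable if for every $t$ the multisets $\{\!\!\{C_t(v): v\in V(G)\}\!\!\}$ and $\{\!\!\{C_t(v): v\in V(H)\}\!\!\}$ coincide. *)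

theory Defs
  imports "HOL-Analysis.Analysis" "HOL-Library.Multiset"
begin

text \<open>Vertices are the elements of a finite type 'n (so V(G) = [n] with n = CARD('n)).
  Labels in {0,1}^d are boolean lists of length d.\<close>

type_synonym 'n lgraph = "('n \<Rightarrow> 'n \<Rightarrow> bool) \<times> ('n \<Rightarrow> bool list)"

definition lgraphs :: "nat \<Rightarrow> ('n::finite) lgraph set" where
  "lgraphs d = {(E, lab). (\<forall>u v. E u v = E v u) \<and> (\<forall>v. \<not> E v v) \<and> (\<forall>v. length (lab v) = d)}"

definition adjm :: "('n::finite) lgraph \<Rightarrow> real^'n^'n" where
  "adjm G = (\<chi> i j. if fst G i j then 1 else 0)"

definition doubly_stochastic :: "real^'n^'n \<Rightarrow> bool" where
  "doubly_stochastic S \<longleftrightarrow> (\<forall>i j. S$i$j \<ge> 0) \<and> (\<forall>i. (\<Sum>j\<in>UNIV. S$i$j) = 1) \<and> (\<forall>j. (\<Sum>i\<in>UNIV. S$i$j) = 1)"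

definition labmat :: "(bool list \<Rightarrow> bool list \<Rightarrow> real) \<Rightarrow> ('n::finite) lgraph \<Rightarrow> 'n lgraph \<Rightarrow> real^'n^'n" where
  "labmat ldist G H = (\<chi> i j. ldist (snd G i) (snd H j))"

text \<open>tr(S^T L) = sum of entrywise products.\<close>
definition trace_TS :: "real^'n^'n \<Rightarrow> real^'n^'n \<Rightarrow> real" where
  "trace_TS S L = (\<Sum>i\<in>UNIV. \<Sum>j\<in>UNIV. S$i$j * L$i$j)"

definition delta_T ::
  "(real^'n^'n \<Rightarrow> real) \<Rightarrow> (bool list \<Rightarrow> bool list \<Rightarrow> real) \<Rightarrow> ('n::finite) lgraph \<Rightarrow> 'n lgraph \<Rightarrow> real" where
  "delta_T N ldist G H = Inf {N (adjm G ** S - S ** adjm H) + trace_TS S (labmat ldist G H) | S. doubly_stochastic S}"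

definition metric_on :: "'a set \<Rightarrow> ('a \<Rightarrow> 'a \<Rightarrow> real) \<Rightarrow> bool" where
  "metric_on X ldist \<longleftrightarrow> (\<forall>x\<in>X. \<forall>y\<in>X. ldist x y \<ge> 0 \<and> (ldist x y = 0 \<longleftrightarrow> x = y) \<and> ldist x y = ldist y x)
     \<and> (\<forall>x\<in>X. \<forall>y\<in>X. \<forall>z\<in>X. ldist x z \<le> ldist x y + ldist y z)"

definition pseudo_metric_on :: "'a set \<Rightarrow> ('a \<Rightarrow> 'a \<Rightarrow> real) \<Rightarrow> bool" where
  "pseudo_metric_on X \<delta> \<longleftrightarrow> (\<forall>x\<in>X. \<delta> x x = 0)
     \<and> (\<forall>x\<in>X. \<forall>y\<in>X. \<delta> x y \<ge> 0 \<and> \<delta> x y = \<delta> y x)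
     \<and> (\<forall>x\<in>X. \<forall>y\<in>X. \<forall>z\<in>X. \<delta> x z \<le> \<delta> x y + \<delta> y z)"

definition matrix_norm :: "(real^'n^'n \<Rightarrow> real) \<Rightarrow> bool" where
  "matrix_norm N \<longleftrightarrow> (\<forall>M. N M \<ge> 0) \<and> (\<forall>M. N M = 0 \<longleftrightarrow> M = 0)
     \<and> (\<forall>c M. N (c *\<^sub>R M) = \<bar>c\<bar> * N M) \<and> (\<forall>M K. N (M + K) \<le> N M + N K)
     \<and> (\<forall>M K. N (M ** K) \<le> N M * N K)"

text \<open>Entry-wise matrix norm: a matrix norm obtained by applying a (symmetric) vector norm
  to the n^2 entries; i.e. its value does not depend on the positions of the entries.\<close>
definition entrywise_matrix_norm :: "(real^('n::finite)^'n \<Rightarrow> real) \<Rightarrow> bool" where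
  "entrywise_matrix_norm N \<longleftrightarrow> matrix_norm N \<and>
     (\<forall>\<sigma> :: 'n \<times> 'n \<Rightarrow> 'n \<times> 'n. \<forall>M. bij \<sigma> \<longrightarrow>
        N (\<chi> i j. M $ fst (\<sigma> (i, j)) $ snd (\<sigma> (i, j))) = N M)"

definition cut_norm :: "real^('n::finite)^'n \<Rightarrow> real" where
  "cut_norm M = Max {\<bar>\<Sum>i\<in>S. \<Sum>j\<in>T. M$i$j\<bar> | S T. S \<subseteq> UNIV \<and> T \<subseteq> UNIV}"

text \<open>1-WL colours. Since RELABEL is injective (and shared between the two graphs, run on
  the disjoint union), colours can be represented by their full unfolding.\<close>
datatype wlcol = Base "bool list" | Step wlcol "wlcol multiset"

fun wl_col :: "('n::finite) lgraph \<Rightarrow> nat \<Rightarrow> 'n \<Rightarrow> wlcol" where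
  "wl_col G 0 v = Base (snd G v)"
| "wl_col G (Suc t) v = Step (wl_col G t v) (image_mset (wl_col G t) (mset_set {u. fst G v u}))"

definition wl_indist :: "('n::finite) lgraph \<Rightarrow> 'n lgraph \<Rightarrow> bool" where
  "wl_indist G H \<longleftrightarrow> (\<forall>t. image_mset (wl_col G t) (mset_set UNIV) = image_mset (wl_col H t) (mset_set UNIV))"

end

theory Submission
  imports Defs
begin

text \<open>The distance is the minimum of a continuous function over the compact set of doubly
  stochastic matrices, so it is attained. The norms in question are invariant under transposition
  and do not increase under multiplication by a doubly stochastic matrix (for entry-wise norms
  because such a matrix is a convex combination of permutation matrices). Transposing a minimiser
  therefore gives symmetry, and multiplying two minimisers gives the triangle inequality.

  The distance vanishes iff some doubly stochastic \<open>S\<close> commutes with the adjacency matrices and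
  only matches equally labelled vertices, i.e. iff the graphs are fractionally isomorphic. By
  Tinhofer's theorem this is 1-WL indistinguishability: the support of such an \<open>S\<close> respects all
  1-WL colours, and conversely the stable 1-WL colouring yields \<open>S\<close> as the normalised matrix
  matching equal colour classes.\<close>

section \<open>Matrices and doubly stochastic matrices\<close>

lemma matrix_matrix_mult_nth: "(A ** B) $ i $ j = (\<Sum>k\<in>UNIV. A$i$k * B$k$j)"
  by (simp add: matrix_matrix_mult_def)

lemma transpose_nth [simp]: "transpose A $ i $ j = A $ j $ i"
  by (simp add: transpose_def)

lemma transpose_diff: "transpose (A - B) = transpose A - transpose (B :: 'a::ab_group_add^'n^'m)"
  by (simp add: vec_eq_iff)

lemma transpose_uminus: "transpose (- A) = - transpose (A :: 'a::ab_group_add^'n^'m)"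
  by (simp add: vec_eq_iff)

lemma matrix_diff_ldistrib: "A ** (B - C) = A ** B - A ** (C :: 'a::ring_1^'n^'m)"
  by (simp add: vec_eq_iff matrix_matrix_mult_nth sum_subtractf right_diff_distrib)

lemma matrix_diff_rdistrib: "(A - B) ** C = A ** C - B ** (C :: 'a::ring_1^'n^'m)"
  by (simp add: vec_eq_iff matrix_matrix_mult_nth sum_subtractf left_diff_distrib)

lemma doubly_stochastic_nonneg: "doubly_stochastic S \<Longrightarrow> 0 \<le> S$i$j"
  by (simp add: doubly_stochastic_def)

lemma doubly_stochastic_row_sum: "doubly_stochastic S \<Longrightarrow> (\<Sum>j\<in>UNIV. S$i$j) = 1"
  by (simp add: doubly_stochastic_def)

lemma doubly_stochastic_col_sum: "doubly_stochastic S \<Longrightarrow> (\<Sum>i\<in>UNIV. S$i$j) = 1"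
  by (simp add: doubly_stochastic_def)

lemma doubly_stochastic_le_1:
  assumes "doubly_stochastic S"
  shows "S$i$j \<le> 1"
proof -
  have "S$i$j \<le> (\<Sum>j\<in>UNIV. S$i$j)"
    by (rule member_le_sum) (auto simp: doubly_stochastic_nonneg[OF assms])
  then show ?thesis
    using doubly_stochastic_row_sum[OF assms] by simp
qed

lemma doubly_stochastic_transpose: "doubly_stochastic S \<Longrightarrow> doubly_stochastic (transpose S)"
  by (simp add: doubly_stochastic_def)

lemma doubly_stochastic_mat_1: "doubly_stochastic (mat 1 :: real^'n^'n)"
  by (simp add: doubly_stochastic_def mat_def)

lemma doubly_stochastic_mult:
  assumes S: "doubly_stochastic S" and T: "doubly_stochastic T"
  shows "doubly_stochastic (S ** T)"
  unfolding doubly_stochastic_def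
proof (intro conjI allI)
  fix i j
  show "0 \<le> (S ** T)$i$j"
    unfolding matrix_matrix_mult_nth
    by (intro sum_nonneg mult_nonneg_nonneg doubly_stochastic_nonneg S T)
next
  fix i
  have "(\<Sum>j\<in>UNIV. (S ** T)$i$j) = (\<Sum>k\<in>UNIV. S$i$k * (\<Sum>j\<in>UNIV. T$k$j))"
    unfolding matrix_matrix_mult_nth sum_distrib_left by (rule sum.swap)
  then show "(\<Sum>j\<in>UNIV. (S ** T)$i$j) = 1"
    by (simp add: doubly_stochastic_row_sum[OF S] doubly_stochastic_row_sum[OF T])
next
  fix j
  have "(\<Sum>i\<in>UNIV. (S ** T)$i$j) = (\<Sum>k\<in>UNIV. (\<Sum>i\<in>UNIV. S$i$k) * T$k$j)"
    unfolding matrix_matrix_mult_nth sum_distrib_right by (rule sum.swap)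
  then show "(\<Sum>i\<in>UNIV. (S ** T)$i$j) = 1"
    by (simp add: doubly_stochastic_col_sum[OF S] doubly_stochastic_col_sum[OF T])
qed

lemma continuous_on_matrix_entry: "continuous_on A (\<lambda>S::real^'n^'m. S$i$j)"
  by (intro continuous_on_component continuous_on_id)

lemma compact_doubly_stochastic: "compact {S::real^'n::finite^'n. doubly_stochastic S}"
proof (rule compact_eq_bounded_closed[THEN iffD2], rule conjI)
  show "bounded {S::real^'n^'n. doubly_stochastic S}"
    unfolding bounded_iff
  proof (intro exI ballI)
    fix S :: "real^'n^'n"
    assume "S \<in> {S. doubly_stochastic S}"
    then have S: "doubly_stochastic S" by simp
    have "norm S \<le> (\<Sum>i\<in>UNIV. norm (S$i))"
      unfolding norm_vec_def by (rule L2_set_le_sum) simp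
    also have "\<dots> \<le> (\<Sum>i\<in>UNIV. \<Sum>j\<in>UNIV. norm (S$i$j))"
      by (intro sum_mono) (simp add: norm_le_l1_cart)
    also have "\<dots> \<le> (\<Sum>i\<in>(UNIV::'n set). \<Sum>j\<in>(UNIV::'n set). 1)"
      using doubly_stochastic_nonneg[OF S] doubly_stochastic_le_1[OF S] by (intro sum_mono) auto
    finally show "norm S \<le> real (CARD('n) * CARD('n))" by simp
  qed
  show "closed {S::real^'n^'n. doubly_stochastic S}"
    unfolding doubly_stochastic_def
    by (intro closed_Collect_conj closed_Collect_all closed_Collect_le closed_Collect_eq
        continuous_on_sum continuous_on_matrix_entry continuous_on_const)
qed

section \<open>Hall's marriage theorem and Birkhoff's decomposition\<close>

definition hall_condition :: "'a set \<Rightarrow> ('a \<Rightarrow> 'b set) \<Rightarrow> bool" where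
  "hall_condition I A \<longleftrightarrow> (\<forall>K\<subseteq>I. card K \<le> card (\<Union>(A ` K)))"

lemma matching_glue:
  assumes "K \<subseteq> I" and g: "inj_on g K" "\<forall>i\<in>K. g i \<in> A i \<inter> U"
    and h: "inj_on h (I - K)" "\<forall>i\<in>I - K. h i \<in> A i - U"
  shows "\<exists>f. inj_on f I \<and> (\<forall>i\<in>I. f i \<in> A i)"
proof (intro exI conjI)
  let ?f = "\<lambda>i. if i \<in> K then g i else h i"
  show "inj_on ?f I"
  proof (rule inj_onI)
    have gU: "g i \<in> U" if "i \<in> K" for i using g(2) that by blast
    have hU: "h i \<notin> U" if "i \<in> I - K" for i using h(2) that by blast
    fix x y
    assume x: "x \<in> I" and y: "y \<in> I" and eq: "?f x = ?f y"
    consider "x \<in> K" "y \<in> K" | "x \<notin> K" "y \<notin> K" | "x \<in> K \<longleftrightarrow> y \<notin> K" by blast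
    then show "x = y"
    proof cases
      case 1 then show ?thesis using eq g(1) by (simp add: inj_on_def)
    next
      case 2 then show ?thesis using eq h(1) x y by (simp add: inj_on_def)
    next
      case 3 then show ?thesis
        using eq x y gU[of x] gU[of y] hU[of x] hU[of y] by (cases "x \<in> K") auto
    qed
  qed
  show "\<forall>i\<in>I. ?f i \<in> A i"
    using g(2) h(2) by auto
qed

lemma hall_condition_remove_tight:
  assumes fin: "finite I" "\<forall>i\<in>I. finite (A i)" and hall: "hall_condition I A"
    and K: "K \<subseteq> I" "card K = card (\<Union>(A ` K))"
  shows "hall_condition (I - K) (\<lambda>i. A i - \<Union>(A ` K))"
  unfolding hall_condition_def
proof (intro allI impI)
  fix L assume L: "L \<subseteq> I - K"
  let ?U = "\<Union>(A ` K)" and ?V = "\<Union>i\<in>L. A i - \<Union>(A ` K)"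
  have finL: "finite L" and finK: "finite K"
    using L K(1) fin(1) finite_subset by blast+
  have "L \<inter> K = {}" using L by blast
  then have "card L + card K = card (L \<union> K)"
    by (simp add: card_Un_disjoint[OF finL finK])
  also have "\<dots> \<le> card (\<Union>(A ` (L \<union> K)))"
    using hall L K(1) unfolding hall_condition_def by blast
  also have "\<Union>(A ` (L \<union> K)) = ?V \<union> ?U" by blast
  also have "card (?V \<union> ?U) = card ?V + card ?U"
  proof (rule card_Un_disjoint)
    show "finite ?V" "finite ?U"
      using finL finK L K(1) fin(2) by (auto intro!: finite_UN_I)
  qed blast
  finally show "card L \<le> card ?V" using K(2) by linarith
qed

lemma hall_condition_remove_point:
  assumes fin: "finite I" "\<forall>i\<in>I. finite (A i)"
    and surplus: "\<And>K. K \<subseteq> I \<Longrightarrow> K \<noteq> {} \<Longrightarrow> K \<noteq> I \<Longrightarrow> card K < card (\<Union>(A ` K))"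
    and i: "i \<in> I"
  shows "hall_condition (I - {i}) (\<lambda>j. A j - {b})"
  unfolding hall_condition_def
proof (intro allI impI)
  fix L assume L: "L \<subseteq> I - {i}"
  show "card L \<le> card (\<Union>j\<in>L. A j - {b})"
  proof (cases "L = {}")
    case False
    have "card L < card (\<Union>(A ` L))" using surplus L i False by blast
    moreover have "finite (\<Union>(A ` L))" using L fin finite_subset by blast
    moreover have "(\<Union>j\<in>L. A j - {b}) = \<Union>(A ` L) - {b}" by blast
    ultimately show ?thesis by (auto simp: card_Diff_singleton_if)
  qed simp
qed

text \<open>If some proper nonempty \<open>K\<close> is tight, match \<open>K\<close> into its neighbourhood and the rest
  outside of it; otherwise every proper subset has surplus, so one edge can be fixed arbitrarily.\<close>

theorem hall_marriage:
  assumes "finite I" "\<forall>i\<in>I. finite (A i)" "hall_condition I A"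
  shows "\<exists>f. inj_on f I \<and> (\<forall>i\<in>I. f i \<in> A i)"
  using assms
proof (induction I arbitrary: A rule: finite_psubset_induct)
  case (psubset I)
  note hall = psubset.prems(2)[unfolded hall_condition_def, rule_format]
  show ?case
  proof (cases "\<exists>K. K \<subseteq> I \<and> K \<noteq> {} \<and> K \<noteq> I \<and> card K = card (\<Union>(A ` K))")
    case True
    then obtain K where K: "K \<subseteq> I" "K \<noteq> {}" "K \<noteq> I" "card K = card (\<Union>(A ` K))" by blast
    have "K \<subset> I" "\<forall>i\<in>K. finite (A i)" "hall_condition K A"
      using K(1,3) psubset.prems(1) hall by (auto simp: hall_condition_def)
    from psubset.IH[OF this] obtain g where g: "inj_on g K" "\<forall>i\<in>K. g i \<in> A i"
      by blast
    have "I - K \<subset> I" "\<forall>i\<in>I - K. finite (A i - \<Union>(A ` K))"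
      using K(1,2) psubset.prems(1) by auto
    from psubset.IH[OF this hall_condition_remove_tight[OF psubset.hyps psubset.prems K(1,4)]]
    obtain h where h: "inj_on h (I - K)" "\<forall>i\<in>I - K. h i \<in> A i - \<Union>(A ` K)"
      by blast
    show ?thesis
      using g h K(1) by (intro matching_glue[where U = "\<Union>(A ` K)"]) auto
  next
    case no_tight: False
    show ?thesis
    proof (cases "I = {}")
      case False
      then obtain i where i: "i \<in> I" by blast
      have surplus: "card K < card (\<Union>(A ` K))" if "K \<subseteq> I" "K \<noteq> {}" "K \<noteq> I" for K
        using hall[OF that(1)] no_tight that by (auto simp: le_less)
      have "card {i} \<le> card (A i)" using hall[of "{i}"] i by simp
      then obtain b where b: "b \<in> A i" by fastforce
      have "I - {i} \<subset> I" "\<forall>j\<in>I - {i}. finite (A j - {b})"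
        using i psubset.prems(1) by auto
      from psubset.IH[OF this hall_condition_remove_point[OF psubset.hyps psubset.prems(1) surplus i]]
      obtain h where h: "inj_on h (I - {i})" "\<forall>j\<in>I - {i}. h j \<in> A j - {b}"
        by blast
      show ?thesis
        using h b i by (intro matching_glue[where K = "{i}" and g = "\<lambda>_. b" and U = "{b}"]) auto
    qed simp
  qed
qed

definition scaled_doubly_stochastic :: "real \<Rightarrow> real^'n^'n \<Rightarrow> bool" where
  "scaled_doubly_stochastic s S \<longleftrightarrow> (\<forall>i j. 0 \<le> S$i$j)
     \<and> (\<forall>i. (\<Sum>j\<in>UNIV. S$i$j) = s) \<and> (\<forall>j. (\<Sum>i\<in>UNIV. S$i$j) = s)"

lemma doubly_stochastic_iff_scaled: "doubly_stochastic S \<longleftrightarrow> scaled_doubly_stochastic 1 S"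
  by (simp add: doubly_stochastic_def scaled_doubly_stochastic_def)

lemma scaled_doubly_stochastic_sum_nonneg: "scaled_doubly_stochastic s S \<Longrightarrow> 0 \<le> s"
  unfolding scaled_doubly_stochastic_def by (metis sum_nonneg)

lemma scaled_doubly_stochastic_0: "scaled_doubly_stochastic 0 S \<Longrightarrow> S = 0"
  unfolding scaled_doubly_stochastic_def vec_eq_iff
  using sum_nonneg_eq_0_iff[of UNIV "\<lambda>j. S$_$j"] by simp

definition perm_matrix :: "('n \<Rightarrow> 'n) \<Rightarrow> real^'n^'n" where
  "perm_matrix f = (\<chi> i j. if f i = j then 1 else 0)"

lemma matrix_mult_perm_matrix:
  assumes "bij f"
  shows "M ** perm_matrix f = (\<chi> i j. M $ i $ inv f j)"
proof -
  have "f k = j \<longleftrightarrow> k = inv f j" for k j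
    using assms by (metis bij_inv_eq_iff)
  then show ?thesis
    by (simp add: vec_eq_iff matrix_matrix_mult_nth perm_matrix_def if_distrib cong: if_cong)
qed

lemma scaled_doubly_stochastic_hall_condition:
  fixes S :: "real^'n::finite^'n"
  assumes S: "scaled_doubly_stochastic s S" and "0 < s"
  shows "hall_condition UNIV (\<lambda>i. {j. 0 < S$i$j})"
  unfolding hall_condition_def
proof (intro allI impI)
  fix K :: "'n set"
  let ?U = "\<Union>i\<in>K. {j. 0 < S$i$j}"
  have nonneg: "0 \<le> S$i$j" for i j using S by (simp add: scaled_doubly_stochastic_def)
  have "real (card K) * s = (\<Sum>i\<in>K. \<Sum>j\<in>UNIV. S$i$j)"
    using S by (simp add: scaled_doubly_stochastic_def)
  also have "\<dots> = (\<Sum>i\<in>K. \<Sum>j\<in>?U. S$i$j)"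
    using nonneg by (intro sum.cong refl sum.mono_neutral_right) (auto simp: not_less order.antisym)
  also have "\<dots> = (\<Sum>j\<in>?U. \<Sum>i\<in>K. S$i$j)"
    by (rule sum.swap)
  also have "\<dots> \<le> (\<Sum>j\<in>?U. \<Sum>i\<in>UNIV. S$i$j)"
    using nonneg by (intro sum_mono sum_mono2) auto
  also have "\<dots> = real (card ?U) * s"
    using S by (simp add: scaled_doubly_stochastic_def)
  finally show "card K \<le> card ?U"
    using \<open>0 < s\<close> by simp
qed

lemma scaled_doubly_stochastic_perm_support:
  assumes "scaled_doubly_stochastic s (S :: real^'n::finite^'n)" "0 < s"
  obtains f where "bij f" "\<And>i. 0 < S$i$(f i)"
proof -
  have "\<exists>f. inj f \<and> (\<forall>i. f i \<in> {j. 0 < S$i$j})"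
    using hall_marriage[of UNIV "\<lambda>i. {j. 0 < S$i$j}"]
      scaled_doubly_stochastic_hall_condition[OF assms] by simp
  then obtain f where f: "inj f" "\<And>i. 0 < S$i$(f i)"
    by auto
  then have "bij f"
    using finite_UNIV_inj_surj[OF finite_class.finite_UNIV, of f] unfolding bij_def by blast
  then show ?thesis
    using that f(2) by blast
qed

lemma scaled_doubly_stochastic_diff_perm_matrix:
  assumes S: "scaled_doubly_stochastic s S" and f: "bij f" and c: "\<And>i. c \<le> S$i$(f i)"
  shows "scaled_doubly_stochastic (s - c) (S - c *\<^sub>R perm_matrix f)"
proof -
  have fj: "f i = j \<longleftrightarrow> i = inv f j" for i j
    using f by (metis bij_inv_eq_iff)
  have "(\<Sum>j\<in>UNIV. perm_matrix f $i$j) = 1" "(\<Sum>i\<in>UNIV. perm_matrix f $i$j) = 1" for i j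
    by (simp add: perm_matrix_def) (simp add: perm_matrix_def fj)
  moreover have "(\<Sum>j\<in>UNIV. (S - c *\<^sub>R perm_matrix f)$i$j)
      = (\<Sum>j\<in>UNIV. S$i$j) - c * (\<Sum>j\<in>UNIV. perm_matrix f $i$j)"
    "(\<Sum>i\<in>UNIV. (S - c *\<^sub>R perm_matrix f)$i$j)
      = (\<Sum>i\<in>UNIV. S$i$j) - c * (\<Sum>i\<in>UNIV. perm_matrix f $i$j)" for i j
    by (simp_all add: sum_subtractf sum_distrib_left)
  moreover have "0 \<le> (S - c *\<^sub>R perm_matrix f)$i$j" for i j
    using S c[of i] by (auto simp: scaled_doubly_stochastic_def perm_matrix_def)
  ultimately show ?thesis
    using S by (simp add: scaled_doubly_stochastic_def)
qed

definition matrix_support :: "real^'n^'n \<Rightarrow> ('n \<times> 'n) set" where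
  "matrix_support S = {(i, j). S$i$j \<noteq> 0}"

lemma matrix_support_diff_perm_matrix:
  assumes "\<And>i. 0 < S$i$(f i)"
  shows "matrix_support (S - S$k$(f k) *\<^sub>R perm_matrix f) \<subset> matrix_support S"
proof
  have "S$i$j \<noteq> 0" if "(S - S$k$(f k) *\<^sub>R perm_matrix f)$i$j \<noteq> 0" for i j
    using that assms[of i] by (cases "f i = j") (auto simp: perm_matrix_def)
  then show "matrix_support (S - S$k$(f k) *\<^sub>R perm_matrix f) \<subseteq> matrix_support S"
    by (auto simp: matrix_support_def)
  have "(k, f k) \<in> matrix_support S" "(k, f k) \<notin> matrix_support (S - S$k$(f k) *\<^sub>R perm_matrix f)"
    using assms[of k] by (auto simp: matrix_support_def perm_matrix_def)
  then show "matrix_support (S - S$k$(f k) *\<^sub>R perm_matrix f) \<noteq> matrix_support S"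
    by blast
qed

text \<open>This is the Birkhoff--von Neumann decomposition in disguise: Hall's theorem yields a
  permutation matrix supported in \<open>S\<close>, and removing as much of it as possible strictly shrinks
  the support of \<open>S\<close>.\<close>

lemma norm_mult_scaled_doubly_stochastic_le:
  fixes N :: "real^'n::finite^'n \<Rightarrow> real"
  assumes hom: "\<And>c M. N (c *\<^sub>R M) = \<bar>c\<bar> * N M"
    and add: "\<And>M K. N (M + K) \<le> N M + N K"
    and perm: "\<And>M f. bij f \<Longrightarrow> N (M ** perm_matrix f) = N M"
  shows "scaled_doubly_stochastic s S \<Longrightarrow> N (M ** S) \<le> s * N M"
proof (induction "card (matrix_support S)" arbitrary: S s rule: less_induct)
  case less
  note S = less.prems
  show ?case
  proof (cases "s = 0")
    case True
    then have "S = 0"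
      using scaled_doubly_stochastic_0 S by simp
    then have "M ** S = 0"
      by (simp add: vec_eq_iff matrix_matrix_mult_nth)
    then show ?thesis
      using hom[of 0 0] True by simp
  next
    case False
    then have "0 < s"
      using scaled_doubly_stochastic_sum_nonneg[OF S] by simp
    then obtain f where f: "bij f" and pos: "\<And>i. 0 < S$i$(f i)"
      using scaled_doubly_stochastic_perm_support[OF S] by blast
    have "Min (range (\<lambda>i. S$i$(f i))) \<in> range (\<lambda>i. S$i$(f i))"
      by (rule Min_in) auto
    then obtain k where kmin: "Min (range (\<lambda>i. S$i$(f i))) = S$k$(f k)"
      by blast
    have k: "S$k$(f k) \<le> S$i$(f i)" for i
      unfolding kmin[symmetric] by simp
    define S' where "S' = S - S$k$(f k) *\<^sub>R perm_matrix f"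
    have "scaled_doubly_stochastic (s - S$k$(f k)) S'"
      unfolding S'_def by (rule scaled_doubly_stochastic_diff_perm_matrix[OF S f k])
    moreover have "card (matrix_support S') < card (matrix_support S)"
      unfolding S'_def by (intro psubset_card_mono matrix_support_diff_perm_matrix pos) simp
    ultimately have "N (M ** S') \<le> (s - S$k$(f k)) * N M"
      using less.hyps by blast
    moreover have "M ** S = M ** S' + S$k$(f k) *\<^sub>R (M ** perm_matrix f)"
      by (simp add: S'_def matrix_diff_ldistrib matrix_scalar_ac scalar_matrix_assoc)
    then have "N (M ** S) \<le> N (M ** S') + S$k$(f k) * N M"
      using add hom perm[OF f] pos[of k] by (metis abs_of_pos)
    ultimately show ?thesis
      by (simp add: algebra_simps)
  qed
qed

section \<open>Norms contracted by doubly stochastic matrices\<close>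

definition admissible_norm :: "(real^'n^'n \<Rightarrow> real) \<Rightarrow> bool" where
  "admissible_norm N \<longleftrightarrow> (\<forall>M. N M = 0 \<longrightarrow> M = 0) \<and> (\<forall>c M. N (c *\<^sub>R M) = \<bar>c\<bar> * N M)
     \<and> (\<forall>M K. N (M + K) \<le> N M + N K) \<and> (\<forall>M. N (transpose M) = N M)
     \<and> (\<forall>M S. doubly_stochastic S \<longrightarrow> N (M ** S) \<le> N M)"

context
  fixes N :: "real^'n::finite^'n \<Rightarrow> real"
  assumes N: "admissible_norm N"
begin

lemma admissible_norm_scaleR: "N (c *\<^sub>R M) = \<bar>c\<bar> * N M"
  using N by (simp add: admissible_norm_def)

lemma admissible_norm_add_le: "N (M + K) \<le> N M + N K"
  using N by (simp add: admissible_norm_def)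

lemma admissible_norm_transpose: "N (transpose M) = N M"
  using N by (simp add: admissible_norm_def)

lemma admissible_norm_mult_right_le: "doubly_stochastic S \<Longrightarrow> N (M ** S) \<le> N M"
  using N by (simp add: admissible_norm_def)

lemma admissible_norm_eq_0_iff: "N M = 0 \<longleftrightarrow> M = 0"
  using N admissible_norm_scaleR[of 0 0] by (auto simp: admissible_norm_def)

lemma admissible_norm_uminus: "N (- M) = N M"
  using admissible_norm_scaleR[of "-1" M] by simp

lemma admissible_norm_nonneg: "0 \<le> N M"
  using admissible_norm_add_le[of M "- M"] admissible_norm_uminus[of M] admissible_norm_eq_0_iff[of 0]
  by simp

lemma admissible_norm_mult_left_le:
  assumes "doubly_stochastic S"
  shows "N (S ** M) \<le> N M"
proof -
  have "N (S ** M) = N (transpose M ** transpose S)"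
    by (metis admissible_norm_transpose matrix_transpose_mul)
  also have "\<dots> \<le> N M"
    using admissible_norm_mult_right_le[OF doubly_stochastic_transpose[OF assms], of "transpose M"]
    by (simp add: admissible_norm_transpose)
  finally show ?thesis .
qed

lemma continuous_on_admissible_norm: "continuous_on A N"
proof -
  have "convex_on UNIV N"
  proof (rule convex_onI)
    fix t :: real and x y
    assume "0 < t" "t < 1"
    then show "N ((1 - t) *\<^sub>R x + t *\<^sub>R y) \<le> (1 - t) * N x + t * N y"
      using admissible_norm_add_le[of "(1 - t) *\<^sub>R x" "t *\<^sub>R y"] by (simp add: admissible_norm_scaleR)
  qed simp
  then show ?thesis
    using convex_on_continuous[of UNIV N] continuous_on_subset by blast
qed

end

lemma entrywise_matrix_norm_admissible:
  fixes N :: "real^'n::finite^'n \<Rightarrow> real"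
  assumes "entrywise_matrix_norm N"
  shows "admissible_norm N"
proof -
  have zero: "\<And>M. N M = 0 \<longleftrightarrow> M = 0" and hom: "\<And>c M. N (c *\<^sub>R M) = \<bar>c\<bar> * N M"
    and add: "\<And>M K. N (M + K) \<le> N M + N K"
    and perm: "\<And>\<sigma> M. bij (\<sigma> :: 'n \<times> 'n \<Rightarrow> 'n \<times> 'n) \<Longrightarrow>
        N (\<chi> i j. M $ fst (\<sigma> (i, j)) $ snd (\<sigma> (i, j))) = N M"
    using assms unfolding entrywise_matrix_norm_def matrix_norm_def by blast+
  have "N (transpose M) = N M" for M
    using perm[OF bij_swap, of M] by (simp add: transpose_def)
  moreover have perm_matrix: "N (M ** perm_matrix f) = N M" if f: "bij f" for M f
  proof -
    have "bij (map_prod id (inv f))"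
      using bij_betw_map_prod[OF bij_id bij_imp_bij_inv[OF f]] by simp
    then show ?thesis
      using perm[of "map_prod id (inv f)" M] by (simp add: matrix_mult_perm_matrix[OF f])
  qed
  moreover have "N (M ** S) \<le> N M" if "doubly_stochastic S" for M S
    using norm_mult_scaled_doubly_stochastic_le[OF hom add perm_matrix, of 1 S M] that
    by (simp add: doubly_stochastic_iff_scaled)
  ultimately show ?thesis
    using zero hom add by (simp add: admissible_norm_def)
qed

definition cut_value :: "real^'n^'n \<Rightarrow> 'n set \<Rightarrow> 'n set \<Rightarrow> real" where
  "cut_value M A B = \<bar>\<Sum>i\<in>A. \<Sum>j\<in>B. M$i$j\<bar>"

lemma cut_norm_eq_Max: "cut_norm M = Max (range (\<lambda>(A, B). cut_value M A B))"
  unfolding cut_norm_def cut_value_def by (rule arg_cong[where f = Max]) auto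

lemma cut_value_le_cut_norm: "cut_value M A B \<le> cut_norm (M::real^'n::finite^'n)"
  unfolding cut_norm_eq_Max by (rule Max_ge) auto

lemma cut_norm_le: "(\<And>A B. cut_value M A B \<le> c) \<Longrightarrow> cut_norm (M::real^'n::finite^'n) \<le> c"
  unfolding cut_norm_eq_Max by (subst Max_le_iff) auto

lemma cut_norm_scaleR: "cut_norm (c *\<^sub>R M) = \<bar>c\<bar> * cut_norm (M::real^'n::finite^'n)"
proof -
  have "cut_value (c *\<^sub>R M) A B = \<bar>c\<bar> * cut_value M A B" for A B
    by (simp add: cut_value_def sum_distrib_left[symmetric] abs_mult)
  then have "cut_norm (c *\<^sub>R M) = Max ((\<lambda>x. \<bar>c\<bar> * x) ` range (\<lambda>(A, B). cut_value M A B))"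
    by (simp add: cut_norm_eq_Max image_image case_prod_unfold)
  also have "\<dots> = \<bar>c\<bar> * cut_norm M"
    unfolding cut_norm_eq_Max by (rule mono_Max_commute[symmetric]) (auto simp: mono_def mult_left_mono)
  finally show ?thesis .
qed

lemma sum_mult_unit_interval_le:
  fixes c x :: "'a \<Rightarrow> real"
  assumes "finite A" "\<And>k. 0 \<le> x k" "\<And>k. x k \<le> 1"
  shows "(\<Sum>k\<in>A. c k * x k) \<le> (\<Sum>k\<in>{k\<in>A. 0 < c k}. c k)"
proof -
  have "(\<Sum>k\<in>A. c k * x k) \<le> (\<Sum>k\<in>A. if 0 < c k then c k else 0)"
    using assms(2,3) by (intro sum_mono) (auto simp: mult_left_le mult_nonpos_nonneg)
  also have "\<dots> = (\<Sum>k\<in>{k\<in>A. 0 < c k}. c k)"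
    using assms(1) by (simp add: sum.If_cases Int_def)
  finally show ?thesis .
qed

text \<open>Summed over \<open>A \<times> B\<close>, the entries of \<open>M ** S\<close> give \<open>\<Sum>k. c k * x k\<close> with
  \<open>0 \<le> x k \<le> 1\<close> and \<open>c k\<close> the column sums of \<open>M\<close> over \<open>A\<close>; this is extremal when \<open>x\<close> is
  the indicator of the positive, or of the negative, coefficients.\<close>

lemma cut_norm_mult_doubly_stochastic_le:
  fixes M S :: "real^'n::finite^'n"
  assumes S: "doubly_stochastic S"
  shows "cut_norm (M ** S) \<le> cut_norm M"
proof (rule cut_norm_le)
  fix A B
  define c where "c k = (\<Sum>i\<in>A. M$i$k)" for k
  define x where "x k = (\<Sum>j\<in>B. S$k$j)" for k
  have x: "0 \<le> x k" "x k \<le> 1" for k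
  proof -
    show "0 \<le> x k"
      unfolding x_def by (intro sum_nonneg doubly_stochastic_nonneg S)
    have "x k \<le> (\<Sum>j\<in>UNIV. S$k$j)"
      unfolding x_def by (rule sum_mono2) (auto intro: doubly_stochastic_nonneg S)
    then show "x k \<le> 1"
      by (simp add: doubly_stochastic_row_sum[OF S])
  qed
  have "(\<Sum>i\<in>A. \<Sum>j\<in>B. (M ** S)$i$j) = (\<Sum>i\<in>A. \<Sum>k\<in>UNIV. M$i$k * x k)"
    unfolding matrix_matrix_mult_nth x_def sum_distrib_left by (intro sum.cong refl sum.swap)
  also have "\<dots> = (\<Sum>k\<in>UNIV. c k * x k)"
    unfolding c_def sum_distrib_right by (rule sum.swap)
  finally have eq: "(\<Sum>i\<in>A. \<Sum>j\<in>B. (M ** S)$i$j) = (\<Sum>k\<in>UNIV. c k * x k)" .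
  have "(\<Sum>k\<in>UNIV. c k * x k) \<le> (\<Sum>k\<in>{k. 0 < c k}. c k)"
    using sum_mult_unit_interval_le[of UNIV x c] x by simp
  also have "\<dots> \<le> cut_value M A {k. 0 < c k}"
    unfolding cut_value_def c_def by (subst sum.swap) simp
  finally have upper: "(\<Sum>k\<in>UNIV. c k * x k) \<le> cut_norm M"
    using cut_value_le_cut_norm by (rule order.trans)
  have "- (\<Sum>k\<in>UNIV. c k * x k) \<le> (\<Sum>k\<in>{k. 0 < - c k}. - c k)"
    using sum_mult_unit_interval_le[of UNIV x "\<lambda>k. - c k"] x by (simp add: sum_negf)
  also have "\<dots> \<le> cut_value M A {k. 0 < - c k}"
    unfolding cut_value_def c_def by (subst sum.swap) (simp add: sum_negf)
  finally have lower: "- (\<Sum>k\<in>UNIV. c k * x k) \<le> cut_norm M"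
    using cut_value_le_cut_norm by (rule order.trans)
  show "cut_value (M ** S) A B \<le> cut_norm M"
    unfolding cut_value_def eq using upper lower by (simp add: abs_le_iff)
qed

lemma cut_norm_admissible: "admissible_norm (cut_norm :: real^'n::finite^'n \<Rightarrow> real)"
proof -
  have "M = 0" if "cut_norm M = 0" for M :: "real^'n^'n"
    using that cut_value_le_cut_norm[of M "{_}" "{_}"] by (simp add: cut_value_def vec_eq_iff)
  moreover have "cut_norm (M + K) \<le> cut_norm M + cut_norm K" for M K :: "real^'n^'n"
  proof (rule cut_norm_le)
    fix A B
    have "cut_value (M + K) A B \<le> cut_value M A B + cut_value K A B"
      by (simp add: cut_value_def sum.distrib abs_triangle_ineq)
    then show "cut_value (M + K) A B \<le> cut_norm M + cut_norm K"
      using cut_value_le_cut_norm[of M A B] cut_value_le_cut_norm[of K A B] by linarith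
  qed
  moreover have "cut_norm (transpose M) \<le> cut_norm M" for M :: "real^'n^'n"
  proof (rule cut_norm_le)
    fix A B
    have "cut_value (transpose M) A B = cut_value M B A"
      unfolding cut_value_def by (simp add: sum.swap[of _ A])
    then show "cut_value (transpose M) A B \<le> cut_norm M"
      using cut_value_le_cut_norm by simp
  qed
  then have "cut_norm (transpose M) = cut_norm M" for M :: "real^'n^'n"
    using order.antisym transpose_transpose by metis
  ultimately show ?thesis
    by (simp add: admissible_norm_def cut_norm_scaleR cut_norm_mult_doubly_stochastic_le)
qed

section \<open>The distance as a pseudo-metric\<close>

definition delta_cost ::
  "(real^'n^'n \<Rightarrow> real) \<Rightarrow> (bool list \<Rightarrow> bool list \<Rightarrow> real) \<Rightarrow> ('n::finite) lgraph \<Rightarrow> 'n lgraph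
     \<Rightarrow> real^'n^'n \<Rightarrow> real" where
  "delta_cost N ldist G H S = N (adjm G ** S - S ** adjm H) + trace_TS S (labmat ldist G H)"

lemma delta_T_eq_Inf: "delta_T N ldist G H = Inf (delta_cost N ldist G H ` {S. doubly_stochastic S})"
  unfolding delta_T_def delta_cost_def by (rule arg_cong[where f = Inf]) auto

lemma continuous_on_matrix_mult_left: "continuous_on A (\<lambda>S::real^'n::finite^'n. M ** S)"
  unfolding matrix_matrix_mult_def
  by (intro continuous_on_vec_lambda continuous_on_sum continuous_on_mult continuous_on_const
      continuous_on_matrix_entry)

lemma continuous_on_matrix_mult_right: "continuous_on A (\<lambda>S::real^'n::finite^'n. S ** M)"
  unfolding matrix_matrix_mult_def
  by (intro continuous_on_vec_lambda continuous_on_sum continuous_on_mult continuous_on_const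
      continuous_on_matrix_entry)

lemma continuous_on_delta_cost:
  assumes "admissible_norm N"
  shows "continuous_on A (delta_cost N ldist G H)"
  unfolding delta_cost_def[abs_def] trace_TS_def
  by (intro continuous_on_add continuous_on_sum continuous_on_mult continuous_on_const
      continuous_on_matrix_entry continuous_on_compose2[OF continuous_on_admissible_norm[OF assms]]
      continuous_on_diff continuous_on_matrix_mult_left continuous_on_matrix_mult_right) auto

lemma delta_T_attained:
  assumes "admissible_norm N"
  obtains S where "doubly_stochastic S" "delta_T N ldist G H = delta_cost N ldist G H S"
    "\<And>S'. doubly_stochastic S' \<Longrightarrow> delta_cost N ldist G H S \<le> delta_cost N ldist G H S'"
proof -
  have "{S. doubly_stochastic S} \<noteq> {}"
    using doubly_stochastic_mat_1 by blast
  from continuous_attains_inf[OF compact_doubly_stochastic this continuous_on_delta_cost[OF assms, of _ ldist G H]]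
  obtain S where "doubly_stochastic S"
    "\<And>S'. doubly_stochastic S' \<Longrightarrow> delta_cost N ldist G H S \<le> delta_cost N ldist G H S'"
    by auto
  moreover from this have "delta_T N ldist G H = delta_cost N ldist G H S"
    unfolding delta_T_eq_Inf by (intro cInf_eq_minimum) auto
  ultimately show ?thesis
    using that by blast
qed

lemma delta_T_le_delta_cost:
  assumes "admissible_norm N" "doubly_stochastic S"
  shows "delta_T N ldist G H \<le> delta_cost N ldist G H S"
proof -
  obtain S0 where "delta_T N ldist G H = delta_cost N ldist G H S0"
    "\<And>S'. doubly_stochastic S' \<Longrightarrow> delta_cost N ldist G H S0 \<le> delta_cost N ldist G H S'"
    using delta_T_attained[OF assms(1)] by blast
  then show ?thesis
    using assms(2) by simp
qed

lemma lgraphs_adj_sym: "G \<in> lgraphs d \<Longrightarrow> fst G u v = fst G v u"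
  by (auto simp: lgraphs_def)

lemma lgraphs_label_length: "G \<in> lgraphs d \<Longrightarrow> length (snd G v) = d"
  by (auto simp: lgraphs_def)

lemma transpose_adjm: "G \<in> lgraphs d \<Longrightarrow> transpose (adjm G) = adjm G"
  by (simp add: vec_eq_iff adjm_def lgraphs_adj_sym[of G d])

lemma trace_TS_transpose: "trace_TS (transpose S) (transpose L) = trace_TS S L"
  unfolding trace_TS_def transpose_nth by (rule sum.swap)

lemma trace_TS_nonneg:
  "(\<And>i j. 0 \<le> S$i$j) \<Longrightarrow> (\<And>i j. 0 \<le> L$i$j) \<Longrightarrow> 0 \<le> trace_TS S L"
  unfolding trace_TS_def by (intro sum_nonneg mult_nonneg_nonneg)

lemma trace_TS_eq_0_iff:
  assumes "\<And>i j. 0 \<le> S$i$j" "\<And>i j. 0 \<le> L$i$j"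
  shows "trace_TS S L = 0 \<longleftrightarrow> (\<forall>i j. S$i$j \<noteq> 0 \<longrightarrow> L$i$j = 0)"
  using assms unfolding trace_TS_def
  by (auto simp: sum_nonneg_eq_0_iff sum_nonneg)

lemma admissible_norm_commutator_mult_le:
  assumes "admissible_norm N" "doubly_stochastic S" "doubly_stochastic T"
  shows "N (A ** (S ** T) - (S ** T) ** C) \<le> N (A ** S - S ** B) + N (B ** T - T ** C)"
proof -
  have "A ** (S ** T) - (S ** T) ** C = (A ** S - S ** B) ** T + S ** (B ** T - T ** C)"
    by (simp add: matrix_diff_ldistrib matrix_diff_rdistrib matrix_mul_assoc)
  then have "N (A ** (S ** T) - (S ** T) ** C)
      \<le> N ((A ** S - S ** B) ** T) + N (S ** (B ** T - T ** C))"
    using admissible_norm_add_le[OF assms(1)] by simp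
  also have "\<dots> \<le> N (A ** S - S ** B) + N (B ** T - T ** C)"
    by (intro add_mono admissible_norm_mult_right_le[OF assms(1,3)]
        admissible_norm_mult_left_le[OF assms(1,2)])
  finally show ?thesis .
qed

context
  fixes ldist :: "bool list \<Rightarrow> bool list \<Rightarrow> real" and d :: nat
  assumes metric: "metric_on {xs. length xs = d} ldist"
begin

lemma labmat_nonneg: "G \<in> lgraphs d \<Longrightarrow> H \<in> lgraphs d \<Longrightarrow> 0 \<le> labmat ldist G H $ i $ j"
  using metric by (simp add: metric_on_def labmat_def lgraphs_label_length)

lemma labmat_eq_0_iff:
  "G \<in> lgraphs d \<Longrightarrow> H \<in> lgraphs d \<Longrightarrow> labmat ldist G H $ i $ j = 0 \<longleftrightarrow> snd G i = snd H j"
  using metric by (simp add: metric_on_def labmat_def lgraphs_label_length)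

lemma transpose_labmat:
  "G \<in> lgraphs d \<Longrightarrow> H \<in> lgraphs d \<Longrightarrow> transpose (labmat ldist G H) = labmat ldist H G"
  using metric by (simp add: metric_on_def labmat_def lgraphs_label_length vec_eq_iff)

lemma trace_labmat_mult_le:
  assumes G: "G \<in> lgraphs d" and H: "H \<in> lgraphs d" and K: "K \<in> lgraphs d"
    and S: "doubly_stochastic S" and T: "doubly_stochastic T"
  shows "trace_TS (S ** T) (labmat ldist G K)
    \<le> trace_TS S (labmat ldist G H) + trace_TS T (labmat ldist H K)"
proof -
  let ?g = "\<lambda>i. snd G i" and ?h = "\<lambda>j. snd H j" and ?k = "\<lambda>l. snd K l"
  have tri: "ldist (?g i) (?k l) \<le> ldist (?g i) (?h j) + ldist (?h j) (?k l)" for i j l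
    using metric G H K unfolding metric_on_def by (simp add: lgraphs_label_length)
  have first: "(\<Sum>i\<in>UNIV. \<Sum>j\<in>UNIV. \<Sum>l\<in>UNIV. S$i$j * T$j$l * ldist (?g i) (?h j))
      = trace_TS S (labmat ldist G H)"
  proof -
    have "(\<Sum>l\<in>UNIV. S$i$j * T$j$l * x) = S$i$j * x * (\<Sum>l\<in>UNIV. T$j$l)" for i j x
      by (simp add: sum_distrib_left mult_ac)
    then show ?thesis
      by (simp add: trace_TS_def labmat_def doubly_stochastic_row_sum[OF T])
  qed
  have second: "(\<Sum>i\<in>UNIV. \<Sum>j\<in>UNIV. \<Sum>l\<in>UNIV. S$i$j * T$j$l * ldist (?h j) (?k l))
      = trace_TS T (labmat ldist H K)"
  proof -
    have "(\<Sum>i\<in>UNIV. \<Sum>j\<in>UNIV. \<Sum>l\<in>UNIV. S$i$j * T$j$l * ldist (?h j) (?k l))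
        = (\<Sum>j\<in>UNIV. \<Sum>i\<in>UNIV. \<Sum>l\<in>UNIV. S$i$j * T$j$l * ldist (?h j) (?k l))"
      by (rule sum.swap)
    also have "\<dots> = (\<Sum>j\<in>UNIV. \<Sum>l\<in>UNIV. \<Sum>i\<in>UNIV. S$i$j * T$j$l * ldist (?h j) (?k l))"
      by (rule sum.cong[OF refl], rule sum.swap)
    also have "\<dots> = (\<Sum>j\<in>UNIV. \<Sum>l\<in>UNIV. T$j$l * ldist (?h j) (?k l) * (\<Sum>i\<in>UNIV. S$i$j))"
      by (simp add: sum_distrib_left mult_ac)
    finally show ?thesis
      by (simp add: trace_TS_def labmat_def doubly_stochastic_col_sum[OF S])
  qed
  have "trace_TS (S ** T) (labmat ldist G K)
      = (\<Sum>i\<in>UNIV. \<Sum>j\<in>UNIV. \<Sum>l\<in>UNIV. S$i$j * T$j$l * ldist (?g i) (?k l))"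
    unfolding trace_TS_def labmat_def matrix_matrix_mult_nth
    by (simp add: sum_distrib_right) (rule sum.cong[OF refl], rule sum.swap)
  also have "\<dots> \<le> (\<Sum>i\<in>UNIV. \<Sum>j\<in>UNIV. \<Sum>l\<in>UNIV.
      S$i$j * T$j$l * (ldist (?g i) (?h j) + ldist (?h j) (?k l)))"
    by (intro sum_mono mult_left_mono tri mult_nonneg_nonneg doubly_stochastic_nonneg S T)
  also have "\<dots> = trace_TS S (labmat ldist G H) + trace_TS T (labmat ldist H K)"
    unfolding first[symmetric] second[symmetric] by (simp add: distrib_left sum.distrib)
  finally show ?thesis .
qed

context
  fixes N :: "real^'n::finite^'n \<Rightarrow> real"
  assumes N: "admissible_norm N"
begin

lemma delta_cost_nonneg:
  "G \<in> lgraphs d \<Longrightarrow> H \<in> lgraphs d \<Longrightarrow> doubly_stochastic S \<Longrightarrow> 0 \<le> delta_cost N ldist G H S"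
  unfolding delta_cost_def
  by (intro add_nonneg_nonneg admissible_norm_nonneg[OF N] trace_TS_nonneg labmat_nonneg
      doubly_stochastic_nonneg)

lemma delta_cost_mat_1:
  assumes G: "G \<in> lgraphs d"
  shows "delta_cost N ldist G G (mat 1) = 0"
proof -
  have "trace_TS (mat 1) (labmat ldist G G) = 0"
    by (subst trace_TS_eq_0_iff) (auto simp: mat_def labmat_nonneg[OF G G] labmat_eq_0_iff[OF G G])
  then show ?thesis
    using admissible_norm_eq_0_iff[OF N, of 0] by (simp add: delta_cost_def)
qed

lemma delta_cost_transpose:
  assumes "G \<in> lgraphs d" "H \<in> lgraphs d"
  shows "delta_cost N ldist H G (transpose S) = delta_cost N ldist G H S"
proof -
  have "adjm H ** transpose S - transpose S ** adjm G = transpose (- (adjm G ** S - S ** adjm H))"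
    by (simp add: transpose_diff transpose_uminus matrix_transpose_mul
        transpose_adjm[OF assms(1)] transpose_adjm[OF assms(2)])
  then have "N (adjm H ** transpose S - transpose S ** adjm G) = N (adjm G ** S - S ** adjm H)"
    by (simp only: admissible_norm_transpose[OF N] admissible_norm_uminus[OF N])
  moreover have "trace_TS (transpose S) (labmat ldist H G) = trace_TS S (labmat ldist G H)"
    using trace_TS_transpose[of S "labmat ldist G H"] by (simp add: transpose_labmat[OF assms])
  ultimately show ?thesis
    by (simp add: delta_cost_def)
qed

lemma delta_cost_mult_le:
  assumes "G \<in> lgraphs d" "H \<in> lgraphs d" "K \<in> lgraphs d"
    and "doubly_stochastic S" "doubly_stochastic T"
  shows "delta_cost N ldist G K (S ** T) \<le> delta_cost N ldist G H S + delta_cost N ldist H K T"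
  using admissible_norm_commutator_mult_le[OF N assms(4,5), of "adjm G" "adjm K" "adjm H"]
    trace_labmat_mult_le[OF assms]
  unfolding delta_cost_def by linarith

lemma delta_T_nonneg:
  assumes "G \<in> lgraphs d" "H \<in> lgraphs d"
  shows "0 \<le> delta_T N ldist G H"
proof -
  obtain S where "doubly_stochastic S" "delta_T N ldist G H = delta_cost N ldist G H S"
    using delta_T_attained[OF N] by blast
  then show ?thesis
    using delta_cost_nonneg[OF assms] by simp
qed

theorem pseudo_metric_on_delta_T: "pseudo_metric_on (lgraphs d) (delta_T N ldist)"
  unfolding pseudo_metric_on_def
proof (intro conjI ballI)
  fix G H K :: "'n lgraph"
  assume G: "G \<in> lgraphs d" and H: "H \<in> lgraphs d" and K: "K \<in> lgraphs d"
  obtain S where S: "doubly_stochastic S" "delta_T N ldist G H = delta_cost N ldist G H S"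
    using delta_T_attained[OF N] by blast
  obtain T where T: "doubly_stochastic T" "delta_T N ldist H K = delta_cost N ldist H K T"
    using delta_T_attained[OF N] by blast
  show "delta_T N ldist G K \<le> delta_T N ldist G H + delta_T N ldist H K"
    using delta_T_le_delta_cost[OF N doubly_stochastic_mult[OF S(1) T(1)], of ldist G K]
      delta_cost_mult_le[OF G H K S(1) T(1)] S(2) T(2) by linarith
next
  fix G H :: "'n lgraph"
  assume G: "G \<in> lgraphs d" and H: "H \<in> lgraphs d"
  have le: "delta_T N ldist H' G' \<le> delta_T N ldist G' H'"
    if "G' \<in> lgraphs d" "H' \<in> lgraphs d" for G' H' :: "'n lgraph"
  proof -
    obtain S where "doubly_stochastic S" "delta_T N ldist G' H' = delta_cost N ldist G' H' S"
      using delta_T_attained[OF N] by blast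
    then show ?thesis
      using delta_T_le_delta_cost[OF N doubly_stochastic_transpose, of S ldist H' G']
        delta_cost_transpose[OF that, of S] by simp
  qed
  show "delta_T N ldist G H = delta_T N ldist H G"
    using le[OF G H] le[OF H G] by simp
  show "0 \<le> delta_T N ldist G H"
    using delta_T_nonneg[OF G H] .
next
  fix G :: "'n lgraph"
  assume G: "G \<in> lgraphs d"
  show "delta_T N ldist G G = 0"
    using delta_T_le_delta_cost[OF N doubly_stochastic_mat_1, of ldist G G] delta_cost_mat_1[OF G]
      delta_T_nonneg[OF G G] by simp
qed

end

end

section \<open>Fractional isomorphism and 1-WL\<close>

definition fractional_isomorphism :: "('n::finite) lgraph \<Rightarrow> 'n lgraph \<Rightarrow> real^'n^'n \<Rightarrow> bool" where
  "fractional_isomorphism G H S \<longleftrightarrow> doubly_stochastic S \<and> adjm G ** S = S ** adjm H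
     \<and> (\<forall>i j. S$i$j \<noteq> 0 \<longrightarrow> snd G i = snd H j)"

context
  fixes ldist :: "bool list \<Rightarrow> bool list \<Rightarrow> real" and d :: nat
    and N :: "real^'n::finite^'n \<Rightarrow> real"
  assumes metric: "metric_on {xs. length xs = d} ldist" and N: "admissible_norm N"
begin

lemma delta_cost_eq_0_iff:
  assumes "G \<in> lgraphs d" "H \<in> lgraphs d" "doubly_stochastic S"
  shows "delta_cost N ldist G H S = 0 \<longleftrightarrow> fractional_isomorphism G H S"
proof -
  have "0 \<le> trace_TS S (labmat ldist G H)"
    using assms by (intro trace_TS_nonneg labmat_nonneg[OF metric] doubly_stochastic_nonneg)
  then show ?thesis
    using assms
    by (simp add: delta_cost_def fractional_isomorphism_def add_nonneg_eq_0_iff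
        admissible_norm_nonneg[OF N] admissible_norm_eq_0_iff[OF N] trace_TS_eq_0_iff
        labmat_nonneg[OF metric] labmat_eq_0_iff[OF metric] doubly_stochastic_nonneg)
qed

lemma delta_T_eq_0_iff:
  assumes G: "G \<in> lgraphs d" and H: "H \<in> lgraphs d"
  shows "delta_T N ldist G H = 0 \<longleftrightarrow> (\<exists>S. fractional_isomorphism G H S)"
proof
  obtain S where S: "doubly_stochastic S" "delta_T N ldist G H = delta_cost N ldist G H S"
    using delta_T_attained[OF N] by blast
  assume "delta_T N ldist G H = 0"
  then show "\<exists>S. fractional_isomorphism G H S"
    using delta_cost_eq_0_iff[OF G H S(1)] S(2) by auto
next
  assume "\<exists>S. fractional_isomorphism G H S"
  then obtain S where S: "fractional_isomorphism G H S" ..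
  then have "doubly_stochastic S"
    by (simp add: fractional_isomorphism_def)
  then have "delta_cost N ldist G H S = 0"
    using delta_cost_eq_0_iff[OF G H] S by blast
  then show "delta_T N ldist G H = 0"
    using delta_T_le_delta_cost[OF N \<open>doubly_stochastic S\<close>, of ldist G H]
      delta_T_nonneg[OF metric N G H] by simp
qed

end

text \<open>By the row and column sums of \<open>S\<close>, the nonnegative sum \<open>\<Sum>i j. S$i$j * (a$i - b$j)\<^sup>2\<close>
  expands to \<open>|a|\<^sup>2 - 2 * c + |b|\<^sup>2\<close>, where the cross term \<open>c = \<Sum>i j. S$i$j * a$i * b$j\<close>
  equals \<open>|a|\<^sup>2\<close> since \<open>a = S *v b\<close> and \<open>|b|\<^sup>2\<close> since \<open>b = a v* S\<close>. So every term vanishes.\<close>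

lemma doubly_stochastic_transfer_eq:
  fixes S :: "real^'n::finite^'n"
  assumes S: "doubly_stochastic S" and a: "a = S *v b" and b: "b = a v* S"
    and nz: "S$i$j \<noteq> 0"
  shows "a$i = b$j"
proof -
  let ?cross = "\<Sum>i\<in>UNIV. \<Sum>j\<in>UNIV. S$i$j * (a$i * b$j)"
  have "?cross = (\<Sum>i\<in>UNIV. a$i * (S *v b)$i)"
    by (simp add: matrix_vector_mult_def sum_distrib_left mult_ac)
  then have cross_a: "?cross = (\<Sum>i\<in>UNIV. (a$i)\<^sup>2)"
    using a by (simp add: power2_eq_square)
  have "?cross = (\<Sum>j\<in>UNIV. b$j * (a v* S)$j)"
    by (subst sum.swap) (simp add: vector_matrix_mult_def sum_distrib_left mult_ac)
  then have cross_b: "?cross = (\<Sum>j\<in>UNIV. (b$j)\<^sup>2)"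
    using b by (simp add: power2_eq_square)
  have "(\<Sum>i\<in>UNIV. \<Sum>j\<in>UNIV. S$i$j * (a$i)\<^sup>2) = (\<Sum>i\<in>UNIV. (a$i)\<^sup>2)"
    by (simp add: sum_distrib_right[symmetric] doubly_stochastic_row_sum[OF S])
  moreover have "(\<Sum>i\<in>UNIV. \<Sum>j\<in>UNIV. S$i$j * (b$j)\<^sup>2) = (\<Sum>j\<in>UNIV. (b$j)\<^sup>2)"
    by (subst sum.swap) (simp add: sum_distrib_right[symmetric] doubly_stochastic_col_sum[OF S])
  moreover have "(\<Sum>i\<in>UNIV. \<Sum>j\<in>UNIV. S$i$j * (a$i - b$j)\<^sup>2)
      = (\<Sum>i\<in>UNIV. \<Sum>j\<in>UNIV. S$i$j * (a$i)\<^sup>2) - 2 * ?cross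
        + (\<Sum>i\<in>UNIV. \<Sum>j\<in>UNIV. S$i$j * (b$j)\<^sup>2)"
    by (simp add: power2_diff algebra_simps sum.distrib sum_subtractf sum_distrib_left)
  ultimately have "(\<Sum>i\<in>UNIV. \<Sum>j\<in>UNIV. S$i$j * (a$i - b$j)\<^sup>2) = 0"
    using cross_a cross_b by simp
  moreover have nonneg: "0 \<le> S$i$j * (a$i - b$j)\<^sup>2" for i j
    by (simp add: doubly_stochastic_nonneg[OF S])
  ultimately have "S$i$j * (a$i - b$j)\<^sup>2 = 0"
    by (simp add: sum_nonneg_eq_0_iff sum_nonneg)
  then show ?thesis
    using nz by simp
qed

lemma doubly_stochastic_transfer_of_support:
  fixes S :: "real^'n::finite^'n"
  assumes S: "doubly_stochastic S" and supp: "\<And>i j. S$i$j \<noteq> 0 \<Longrightarrow> a$i = b$j"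
  shows "a = S *v b" "b = a v* S"
proof -
  have ab: "S$i$j * b$j = S$i$j * a$i" for i j
    using supp[of i j] by (metis mult_zero_left)
  have "(S *v b)$i = (\<Sum>j\<in>UNIV. S$i$j) * a$i" for i
    by (simp add: matrix_vector_mult_def sum_distrib_right ab)
  moreover have "(a v* S)$j = b$j * (\<Sum>i\<in>UNIV. S$i$j)" for j
  proof -
    have eq: "a$i * S$i$j = b$j * S$i$j" for i
      using ab[of i j] by (metis mult.commute)
    show ?thesis
      unfolding vector_matrix_mult_def vec_lambda_beta sum_distrib_left by (intro sum.cong refl eq)
  qed
  ultimately show "a = S *v b" "b = a v* S"
    by (simp_all add: vec_eq_iff doubly_stochastic_row_sum[OF S] doubly_stochastic_col_sum[OF S])
qed

lemma sum_matrix_vector_mult_doubly_stochastic: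
  assumes "doubly_stochastic S"
  shows "(\<Sum>i\<in>UNIV. (S *v x)$i) = (\<Sum>j\<in>UNIV. x$j)"
proof -
  have "(\<Sum>i\<in>UNIV. (S *v x)$i) = (\<Sum>j\<in>UNIV. (\<Sum>i\<in>UNIV. S$i$j) * x$j)"
    unfolding matrix_vector_mult_def vec_lambda_beta sum_distrib_right by (rule sum.swap)
  then show ?thesis
    by (simp add: doubly_stochastic_col_sum[OF assms])
qed

lemma count_image_mset_mset_set:
  "finite A \<Longrightarrow> count (image_mset f (mset_set A)) c = card {x\<in>A. f x = c}"
  by (simp add: count_image_mset Int_def sum.If_cases conj_commute)

definition wl_indicator :: "('n::finite) lgraph \<Rightarrow> nat \<Rightarrow> wlcol \<Rightarrow> real^'n" where
  "wl_indicator G t c = (\<chi> u. of_bool (wl_col G t u = c))"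

lemma adjm_mult_wl_indicator:
  "(adjm G *v wl_indicator G t c) $ i
    = of_nat (count (image_mset (wl_col G t) (mset_set {u. fst G i u})) c)"
proof -
  have "(if fst G i u then 1 else 0) * of_bool (wl_col G t u = c)
      = (of_bool (fst G i u \<and> wl_col G t u = c) :: real)" for u
    by simp
  then have "(adjm G *v wl_indicator G t c) $ i
      = (\<Sum>u\<in>UNIV. of_bool (fst G i u \<and> wl_col G t u = c))"
    unfolding matrix_vector_mult_def adjm_def wl_indicator_def vec_lambda_beta by presburger
  also have "\<dots> = of_nat (card {u\<in>{u. fst G i u}. wl_col G t u = c})"
    by simp
  finally show ?thesis
    by (simp add: count_image_mset_mset_set)
qed

lemma sum_wl_indicator:
  "(\<Sum>i\<in>UNIV. wl_indicator G t c $ i) = of_nat (count (image_mset (wl_col G t) (mset_set UNIV)) c)"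
  by (simp add: wl_indicator_def count_image_mset_mset_set)

lemma wl_col_eq_imp_label_eq: "wl_col G t x = wl_col H t y \<Longrightarrow> snd G x = snd H y"
  by (induction t arbitrary: x y) auto

text \<open>Tinhofer's argument: on the support of \<open>S\<close> the colour indicator vectors of the two graphs
  agree, hence are transferred into each other by \<open>S\<close>, and so are the neighbour counts
  obtained by multiplying with the commuting adjacency matrices.\<close>

lemma fractional_isomorphism_wl_col:
  assumes G: "G \<in> lgraphs d" and H: "H \<in> lgraphs d" and S: "fractional_isomorphism G H S"
  shows "S$i$j \<noteq> 0 \<Longrightarrow> wl_col G t i = wl_col H t j"
proof (induction t arbitrary: i j)
  case 0
  then show ?case
    using S by (simp add: fractional_isomorphism_def)
next
  case (Suc t)
  have ds: "doubly_stochastic S" and comm: "adjm G ** S = S ** adjm H"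
    using S by (simp_all add: fractional_isomorphism_def)
  have "count (image_mset (wl_col G t) (mset_set {u. fst G i u})) c
      = count (image_mset (wl_col H t) (mset_set {u. fst H j u})) c" for c
  proof -
    let ?x = "wl_indicator G t c" and ?y = "wl_indicator H t c"
    have "?x$i' = ?y$j'" if "S$i'$j' \<noteq> 0" for i' j'
      using Suc.IH[OF that] by (simp add: wl_indicator_def)
    note transfer = doubly_stochastic_transfer_of_support[OF ds this]
    have "adjm G *v ?x = S *v (adjm H *v ?y)"
      using transfer(1) comm by (metis matrix_vector_mul_assoc)
    moreover have "adjm H *v ?y = (adjm G *v ?x) v* S"
    proof -
      have "(adjm G *v ?x) v* S = ?x v* (adjm G ** S)"
        by (metis vector_matrix_mul_assoc vector_transpose_matrix transpose_adjm[OF G])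
      also have "\<dots> = adjm H *v ?y"
        using transfer(2) comm
        by (metis vector_matrix_mul_assoc vector_transpose_matrix transpose_adjm[OF H])
      finally show ?thesis ..
    qed
    ultimately have "(adjm G *v ?x) $ i = (adjm H *v ?y) $ j"
      by (rule doubly_stochastic_transfer_eq[OF ds _ _ Suc.prems])
    then show ?thesis
      by (simp add: adjm_mult_wl_indicator)
  qed
  then show ?case
    using Suc.IH[OF Suc.prems] by (simp add: multiset_eq_iff)
qed

lemma fractional_isomorphism_imp_wl_indist:
  assumes G: "G \<in> lgraphs d" and H: "H \<in> lgraphs d" and S: "fractional_isomorphism G H S"
  shows "wl_indist G H"
  unfolding wl_indist_def multiset_eq_iff
proof (intro allI)
  fix t c
  have ds: "doubly_stochastic S"
    using S by (simp add: fractional_isomorphism_def)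
  have "wl_indicator G t c = S *v wl_indicator H t c"
    using doubly_stochastic_transfer_of_support(1)[OF ds] fractional_isomorphism_wl_col[OF G H S]
    by (simp add: wl_indicator_def)
  then have "(\<Sum>i\<in>UNIV. wl_indicator G t c $ i) = (\<Sum>j\<in>UNIV. wl_indicator H t c $ j)"
    by (simp add: sum_matrix_vector_mult_doubly_stochastic[OF ds])
  then show "count (image_mset (wl_col G t) (mset_set UNIV)) c
      = count (image_mset (wl_col H t) (mset_set UNIV)) c"
    by (simp add: sum_wl_indicator)
qed

lemma nat_antimono_stabilises:
  fixes f :: "nat \<Rightarrow> nat"
  assumes "\<And>t. f (Suc t) \<le> f t"
  shows "\<exists>T. f (Suc T) = f T"
proof (rule ccontr)
  assume "\<nexists>T. f (Suc T) = f T"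
  then have decr: "f (Suc t) < f t" for t
    using assms le_neq_implies_less by blast
  have bound: "f t + t \<le> f 0" for t
  proof (induction t)
    case (Suc t)
    then show ?case using decr[of t] by simp
  qed simp
  show False
    using bound[of "Suc (f 0)"] by simp
qed

definition wl_stable_at :: "('n::finite) lgraph \<Rightarrow> 'n lgraph \<Rightarrow> nat \<Rightarrow> bool" where
  "wl_stable_at G H T \<longleftrightarrow> (\<forall>X\<in>{G, H}. \<forall>Y\<in>{G, H}. \<forall>x y.
     wl_col X T x = wl_col Y T y \<longrightarrow> wl_col X (Suc T) x = wl_col Y (Suc T) y)"

text \<open>The colour partition of the disjoint union only gets finer, so it stabilises.\<close>

lemma wl_stable_at_exists: "\<exists>T. wl_stable_at G H T"
proof -
  define col where "col t p = wl_col (if fst p then G else H) t (snd p)" for t and p :: "bool \<times> _"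
  define E where "E t = {(p, q). col t p = col t q}" for t
  have sub: "E (Suc t) \<subseteq> E t" for t
    by (auto simp: E_def col_def)
  then have "card (E (Suc t)) \<le> card (E t)" for t
    by (intro card_mono) auto
  then obtain T where "card (E (Suc T)) = card (E T)"
    using nat_antimono_stabilises[of "\<lambda>t. card (E t)"] by blast
  then have "E (Suc T) = E T"
    using sub by (intro card_subset_eq) auto
  then have "col (Suc T) p = col (Suc T) q" if "col T p = col T q" for p q
  proof -
    have "(p, q) \<in> E (Suc T)"
      unfolding \<open>E (Suc T) = E T\<close> by (simp add: E_def that)
    then show ?thesis
      by (simp add: E_def)
  qed
  note step = this
  have sel: "(if Z = G then G else H) = Z" if "Z \<in> {G, H}" for Z
    using that by auto
  have "wl_stable_at G H T"
    unfolding wl_stable_at_def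
  proof (intro ballI allI impI)
    fix X Y x y
    assume "X \<in> {G, H}" "Y \<in> {G, H}" "wl_col X T x = wl_col Y T y"
    then show "wl_col X (Suc T) x = wl_col Y (Suc T) y"
      using step[of "(X = G, x)" "(Y = G, y)"] by (simp add: col_def sel)
  qed
  then show ?thesis ..
qed

definition wl_degree :: "('n::finite) lgraph \<Rightarrow> nat \<Rightarrow> 'n \<Rightarrow> wlcol \<Rightarrow> nat" where
  "wl_degree G t x c = card {u. fst G x u \<and> wl_col G t u = c}"

lemma wl_degree_eq_of_wl_col_Suc_eq:
  "wl_col G (Suc t) x = wl_col H (Suc t) y \<Longrightarrow> wl_degree G t x c = wl_degree H t y c"
  by (simp add: wl_degree_def multiset_eq_iff count_image_mset_mset_set)

lemma wl_degree_double_count: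
  assumes "G \<in> lgraphs d"
  shows "(\<Sum>x | wl_col G t x = c. wl_degree G t x c')
    = (\<Sum>u | wl_col G t u = c'. wl_degree G t u c)"
proof -
  define P where "P c c' = (SIGMA x:{x. wl_col G t x = c}. {u. fst G x u \<and> wl_col G t u = c'})"
    for c c'
  have "(\<Sum>x | wl_col G t x = c. wl_degree G t x c') = card (P c c')" for c c'
    by (simp add: P_def wl_degree_def)
  moreover have "prod.swap ` P c c' = P c' c"
    using lgraphs_adj_sym[OF assms] by (auto simp: P_def)
  then have "card (P c c') = card (P c' c)"
    by (metis card_image inj_swap)
  ultimately show ?thesis
    by simp
qed

lemma wl_indist_card_class:
  assumes "wl_indist G H"
  shows "card {x. wl_col G t x = c} = card {x. wl_col H t x = c}"
proof -
  have "count (image_mset (wl_col G t) (mset_set UNIV)) c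
      = count (image_mset (wl_col H t) (mset_set UNIV)) c"
    using assms unfolding wl_indist_def by simp
  then show ?thesis
    by (simp add: count_image_mset_mset_set)
qed

lemma wl_indist_card_class_pos:
  assumes "wl_indist G H"
  shows "0 < card {x. wl_col H t x = wl_col G t i}"
proof -
  have "0 < card {x. wl_col G t x = wl_col G t i}"
    by (auto simp: card_gt_0_iff)
  then show ?thesis
    using wl_indist_card_class[OF assms] by metis
qed

definition wl_class_matrix :: "('n::finite) lgraph \<Rightarrow> 'n lgraph \<Rightarrow> nat \<Rightarrow> real^'n^'n" where
  "wl_class_matrix G H T =
     (\<chi> i j. of_bool (wl_col G T i = wl_col H T j) / card {x. wl_col H T x = wl_col H T j})"

lemma wl_class_matrix_doubly_stochastic:
  assumes "wl_indist G H"
  shows "doubly_stochastic (wl_class_matrix G H T)"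
proof -
  let ?m = "\<lambda>c. card {x. wl_col H T x = c}"
  note posG = wl_indist_card_class_pos[OF assms, of T]
  have posH: "0 < ?m (wl_col H T j)" for j
    by (auto simp: card_gt_0_iff)
  have "(\<Sum>j\<in>UNIV. wl_class_matrix G H T $ i $ j)
      = (\<Sum>j\<in>UNIV. of_bool (wl_col H T j = wl_col G T i)) / ?m (wl_col G T i)" for i
    unfolding sum_divide_distrib wl_class_matrix_def by (intro sum.cong) auto
  moreover have "(\<Sum>i\<in>UNIV. wl_class_matrix G H T $ i $ j)
      = (\<Sum>i\<in>UNIV. of_bool (wl_col G T i = wl_col H T j)) / ?m (wl_col H T j)" for j
    unfolding sum_divide_distrib wl_class_matrix_def by simp
  moreover have "\<exists>x. wl_col H T x = wl_col G T i" for i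
    using posG[of i] by (auto simp: card_gt_0_iff)
  ultimately show ?thesis
    using posG posH wl_indist_card_class[OF assms]
    by (auto simp: doubly_stochastic_def wl_class_matrix_def)
qed

lemma wl_class_matrix_label_eq:
  "wl_class_matrix G H T $ i $ j \<noteq> 0 \<Longrightarrow> snd G i = snd H j"
  by (auto simp: wl_class_matrix_def intro: wl_col_eq_imp_label_eq split: if_splits)

lemma adjm_mult_wl_class_matrix:
  "(adjm G ** wl_class_matrix G H T) $ i $ j
    = wl_degree G T i (wl_col H T j) / card {x. wl_col H T x = wl_col H T j}"
proof -
  have "(if fst G i k then 1 else 0) * of_bool (wl_col G T k = wl_col H T j)
      = (of_bool (fst G i k \<and> wl_col G T k = wl_col H T j) :: real)" for k
    by simp
  then show ?thesis
    by (simp add: matrix_matrix_mult_nth adjm_def wl_class_matrix_def wl_degree_def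
        sum_divide_distrib[symmetric])
qed

lemma wl_class_matrix_mult_adjm:
  assumes "H \<in> lgraphs d"
  shows "(wl_class_matrix G H T ** adjm H) $ i $ j
    = wl_degree H T j (wl_col G T i) / card {x. wl_col H T x = wl_col G T i}"
proof -
  have "of_bool (wl_col G T i = wl_col H T k) / card {x. wl_col H T x = wl_col H T k}
      * (if fst H k j then 1 else 0)
      = (of_bool (fst H j k \<and> wl_col H T k = wl_col G T i) :: real)
        / card {x. wl_col H T x = wl_col G T i}" for k
    using lgraphs_adj_sym[OF assms] by auto
  then show ?thesis
    by (simp add: matrix_matrix_mult_nth adjm_def wl_class_matrix_def wl_degree_def
        sum_divide_distrib[symmetric])
qed

text \<open>Count the edges of \<open>H\<close> between the classes of \<open>wl_col G T i\<close> and \<open>wl_col H T j\<close> from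
  both ends; stability makes all vertices of a class have the same degree into the other one.\<close>

lemma wl_class_degree_balance:
  assumes H: "H \<in> lgraphs d" and stable: "wl_stable_at G H T"
  shows "card {x. wl_col H T x = wl_col G T i} * wl_degree G T i (wl_col H T j)
    = card {x. wl_col H T x = wl_col H T j} * wl_degree H T j (wl_col G T i)"
proof -
  let ?c = "wl_col G T i" and ?c' = "wl_col H T j"
  have "wl_degree H T x ?c' = wl_degree G T i ?c'" if "wl_col H T x = ?c" for x
  proof -
    have "wl_col H (Suc T) x = wl_col G (Suc T) i"
      using stable that unfolding wl_stable_at_def by blast
    then show ?thesis
      by (rule wl_degree_eq_of_wl_col_Suc_eq)
  qed
  then have "card {x. wl_col H T x = ?c} * wl_degree G T i ?c'
      = (\<Sum>x | wl_col H T x = ?c. wl_degree H T x ?c')"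
    by simp
  also have "\<dots> = (\<Sum>u | wl_col H T u = ?c'. wl_degree H T u ?c)"
    by (rule wl_degree_double_count[OF H])
  also have "\<dots> = card {x. wl_col H T x = ?c'} * wl_degree H T j ?c"
  proof -
    have deg: "wl_degree H T u ?c = wl_degree H T j ?c" if "wl_col H T u = ?c'" for u
    proof -
      have "wl_col H (Suc T) u = wl_col H (Suc T) j"
        using stable that unfolding wl_stable_at_def by blast
      then show ?thesis
        by (rule wl_degree_eq_of_wl_col_Suc_eq)
    qed
    have "(\<Sum>u | wl_col H T u = ?c'. wl_degree H T u ?c)
        = (\<Sum>u | wl_col H T u = ?c'. wl_degree H T j ?c)"
      by (rule sum.cong[OF refl]) (rule deg, simp)
    then show ?thesis
      by simp
  qed
  finally show ?thesis .
qed

lemma wl_indist_imp_fractional_isomorphism: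
  assumes H: "H \<in> lgraphs d" and indist: "wl_indist G H"
  shows "\<exists>S. fractional_isomorphism G H S"
proof -
  obtain T where stable: "wl_stable_at G H T"
    using wl_stable_at_exists by blast
  let ?S = "wl_class_matrix G H T"
  have ds: "doubly_stochastic ?S"
    by (rule wl_class_matrix_doubly_stochastic[OF indist])
  have "(adjm G ** ?S) $ i $ j = (?S ** adjm H) $ i $ j" for i j
  proof -
    let ?m = "\<lambda>c. real (card {x. wl_col H T x = c})"
    have "?m (wl_col H T j) \<noteq> 0" "?m (wl_col G T i) \<noteq> 0"
      using wl_indist_card_class_pos[OF indist, of T i] by (auto simp: card_gt_0_iff)
    moreover have "?m (wl_col G T i) * wl_degree G T i (wl_col H T j)
        = ?m (wl_col H T j) * wl_degree H T j (wl_col G T i)"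
      using wl_class_degree_balance[OF H stable, of i j] by (metis of_nat_mult)
    ultimately show ?thesis
      by (simp add: adjm_mult_wl_class_matrix wl_class_matrix_mult_adjm[OF H] frac_eq_eq
          mult.commute)
  qed
  then have "adjm G ** ?S = ?S ** adjm H"
    by (simp add: vec_eq_iff)
  then show ?thesis
    using ds wl_class_matrix_label_eq unfolding fractional_isomorphism_def by blast
qed

theorem mainTheorem2:
  fixes N :: "real^('n::finite)^'n \<Rightarrow> real"
    and ldist :: "bool list \<Rightarrow> bool list \<Rightarrow> real"
    and d :: nat
  assumes "metric_on {xs. length xs = d} ldist"
    and "entrywise_matrix_norm N \<or> N = cut_norm"
  shows "pseudo_metric_on (lgraphs d) (delta_T N ldist)
     \<and> (\<forall>G\<in>lgraphs d. \<forall>H\<in>lgraphs d. delta_T N ldist G H = 0 \<longleftrightarrow> wl_indist G H)"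
proof -
  have N: "admissible_norm N"
    using assms(2) entrywise_matrix_norm_admissible cut_norm_admissible by blast
  have "delta_T N ldist G H = 0 \<longleftrightarrow> wl_indist G H" if "G \<in> lgraphs d" "H \<in> lgraphs d" for G H
    using delta_T_eq_0_iff[OF assms(1) N that] fractional_isomorphism_imp_wl_indist[OF that]
      wl_indist_imp_fractional_isomorphism[OF that(2)] by blast
  then show ?thesis
    using pseudo_metric_on_delta_T[OF assms(1) N] by blast
qed

end
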